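(* Let $C$ be a closed cone with nonempty interior $\operatorname{int} C$ in a real Banach space $X$, and let $f:\operatorname{int} C \to \operatorname{int} C$ be subhomogeneous and type K order-preserving. Suppose that $f$ has a fixed point in $\operatorname{int} C$ and that, for some $x \in \operatorname{int} C$, the norm closure of the orbit $\mathcal{O}(x,f) = \{f^k(x) : k \in \mathbb{N}\}$ is compact. Then the sequence $f^k(x)$ converges (in norm) to a fixed point of $f$.
   Context: A closed cone is a closed convex set $C \subset X$ with $\lambda C \subset C$ for all $\lambda \ge 0$ and $C \cap (-C) = \{0\}$. It induces the partial order $x \le y$ iff $y - x \in C$. A map $f$ on a domain $D\subseteq X$ is order-preserving if $x \le y$ implies $f(x) \le f(y)$; it is subhomogeneous if $f(tx) \le t f(x)$ for all $t \ge 1$ and $x \in D$. A map $f: D \to X$ is type K order-preserving if for any $x, y \in D$ with $x \le y$ there exists $\epsilon > 0$ such that $f(y) - f(x) \ge \epsilon (y - x)$. *)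

theory Defs
  imports "HOL-Analysis.Analysis"
begin

definition closed_cone :: "'a::real_normed_vector set \<Rightarrow> bool" where
  "closed_cone C \<longleftrightarrow> closed C \<and> convex C \<and> (\<forall>c::real. \<forall>x\<in>C. c \<ge> 0 \<longrightarrow> c *\<^sub>R x \<in> C)
     \<and> C \<inter> uminus ` C = {0}"

definition cone_le :: "'a::real_normed_vector set \<Rightarrow> 'a \<Rightarrow> 'a \<Rightarrow> bool" where
  "cone_le C x y \<longleftrightarrow> y - x \<in> C"

definition subhomogeneous_on :: "'a::real_normed_vector set \<Rightarrow> 'a set \<Rightarrow> ('a \<Rightarrow> 'a) \<Rightarrow> bool" where
  "subhomogeneous_on C D f \<longleftrightarrow>
     (\<forall>t::real. \<forall>x\<in>D. t \<ge> 1 \<longrightarrow> cone_le C (f (t *\<^sub>R x)) (t *\<^sub>R f x))"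

definition typeK_order_preserving_on :: "'a::real_normed_vector set \<Rightarrow> 'a set \<Rightarrow> ('a \<Rightarrow> 'a) \<Rightarrow> bool" where
  "typeK_order_preserving_on C D f \<longleftrightarrow>
     (\<forall>x\<in>D. \<forall>y\<in>D. cone_le C x y \<longrightarrow>
        (\<exists>\<epsilon>::real. \<epsilon> > 0 \<and> cone_le C (\<epsilon> *\<^sub>R (y - x)) (f y - f x)))"

end

theory Submission
  imports Defs
begin

text \<open>
  The \<open>\<omega>\<close>-limit set \<open>\<Omega>\<close> of \<open>x\<close> is compact, lies between two multiples of the fixed point
  \<open>p\<close> (hence in the interior of \<open>C\<close>) and satisfies \<open>f \<Omega> = \<Omega>\<close>. Although \<open>f\<close> need not be
  continuous, it maps the order neighbourhood \<open>[(1 - \<eta>) a, (1 + \<eta>) a]\<close> of \<open>a\<close> into that of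
  \<open>f a\<close>, and these neighbourhoods suffice to pass to limits along the orbit.

  Let \<open>A\<close> (\<open>spread\<close> below) be the least \<open>A \<ge> 1\<close> with \<open>u \<le> A v\<close> for all \<open>u, v \<in> \<Omega>\<close>. If \<open>A > 1\<close>,
  compactness and \<open>f \<Omega> = \<Omega>\<close> give \<open>u, v \<in> \<Omega>\<close> such that \<open>f\<^sup>n u \<le> \<beta> f\<^sup>n v\<close> fails for
  every \<open>n\<close> and every \<open>\<beta> < A\<close>. Type K gives \<open>w\<^sub>n\<^sub>+\<^sub>1 \<ge> \<epsilon>\<^sub>n w\<^sub>n\<close> for
  \<open>w\<^sub>n = A f\<^sup>n v - f\<^sup>n u\<close>, so \<open>w\<^sub>N\<close> dominates a multiple of \<open>w\<^sub>0 + \<dots> + w\<^sub>N\<^sub>-\<^sub>1\<close>.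
  Since the orbit of \<open>x\<close> keeps returning near \<open>u\<close> and \<open>v\<close>, \<open>v \<ge> \<theta> f\<^sup>m u\<close> for some \<open>m\<close>
  and some \<open>\<theta>\<close> with \<open>A \<theta> > 1\<close>, which makes these partial sums eventually dominate \<open>p\<close>.
  Then \<open>f\<^sup>N u \<le> (A - \<delta>) f\<^sup>N v\<close> for some \<open>\<delta> > 0\<close>, a contradiction. Hence \<open>A = 1\<close>, \<open>\<Omega>\<close> is a
  single point, necessarily fixed, and the orbit converges to it.
\<close>

locale cone_order =
  fixes C :: "'a::real_normed_vector set"
  assumes closed_cone: "closed_cone C"
begin

lemma convex_cone: "convex_cone C"
  using closed_cone unfolding closed_cone_def convex_cone_def conic_def by blast

lemma closed: "closed C"
  using closed_cone unfolding closed_cone_def by blast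

lemma add_mem: "a \<in> C \<Longrightarrow> b \<in> C \<Longrightarrow> a + b \<in> C"
  using convex_cone_add[OF convex_cone] .

lemma scaleR_mem: "0 \<le> c \<Longrightarrow> a \<in> C \<Longrightarrow> c *\<^sub>R a \<in> C"
  using convex_cone_scaleR[OF convex_cone] .

lemma sum_mem: "(\<And>k. k \<in> F \<Longrightarrow> g k \<in> C) \<Longrightarrow> sum g F \<in> C"
  by (induction F rule: infinite_finite_induct)
    (auto intro: add_mem convex_cone_contains_0[OF convex_cone])

lemma diff_mem_trans: "b - a \<in> C \<Longrightarrow> c - b \<in> C \<Longrightarrow> c - a \<in> C"
  using add_mem[of "b - a" "c - b"] by simp

lemma diff_mem_antisym: assumes "b - a \<in> C" "a - b \<in> C" shows "a = b"
proof -
  have "- (a - b) \<in> uminus ` C"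
    using assms(2) by (rule imageI)
  then have "b - a \<in> C \<inter> uminus ` C"
    using assms(1) by simp
  then show ?thesis
    using closed_cone unfolding closed_cone_def by simp
qed

lemma le_scaled_mono:
  assumes "b \<in> C" "s \<le> t" "s *\<^sub>R b - a \<in> C"
  shows "t *\<^sub>R b - a \<in> C"
  using add_mem[OF scaleR_mem[of "t - s", OF _ assms(1)] assms(3)] assms(2)
  by (simp add: algebra_simps)

lemma interior_upward: assumes "a \<in> interior C" "b - a \<in> C" shows "b \<in> interior C"
proof -
  have "(\<lambda>y. (b - a) + y) ` interior C \<subseteq> interior C"
    by (rule interior_maximal)
      (use interior_subset add_mem[OF assms(2)] open_translation[OF open_interior] in auto)
  moreover have "(b - a) + a \<in> (\<lambda>y. (b - a) + y) ` interior C"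
    using assms(1) by (rule imageI)
  ultimately show ?thesis
    by auto
qed

lemma interior_scaleR: assumes "a \<in> interior C" "0 < t" shows "t *\<^sub>R a \<in> interior C"
proof -
  have "(\<lambda>y. t *\<^sub>R y) ` interior C \<subseteq> interior C"
  proof (rule interior_maximal)
    show "(\<lambda>y. t *\<^sub>R y) ` interior C \<subseteq> C"
      using assms(2) by (auto intro!: scaleR_mem dest: interior_subset[THEN subsetD])
  qed (use open_scaling[OF _ open_interior] assms(2) in auto)
  then show ?thesis
    using assms(1) by blast
qed

lemma interior_dominates:
  assumes "a \<in> interior C"
  obtains r where "1 \<le> r" "r *\<^sub>R a - z \<in> C"
proof -
  obtain e where e: "0 < e" "ball a e \<subseteq> C"
    using assms mem_interior by blast
  define t where "t = e / (2 * (norm z + 1))"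
  have "0 < norm z + 1"
    using norm_ge_zero[of z] by linarith
  then have t: "0 < t" "t * (norm z + 1) = e / 2"
    using e(1) by (simp_all add: t_def field_simps)
  then have "norm (t *\<^sub>R z) < e"
    using e(1) by (simp add: algebra_simps)
  then have "a - t *\<^sub>R z \<in> C"
    using e(2) by (auto simp: dist_norm)
  then have "(1 / t) *\<^sub>R (a - t *\<^sub>R z) \<in> C"
    using scaleR_mem t(1) by simp
  then have "(1 / t) *\<^sub>R a - z \<in> C"
    using t(1) by (simp add: scaleR_diff_right)
  with le_scaled_mono[OF interior_subset[THEN subsetD, OF assms]]
  have "max (1 / t) 1 *\<^sub>R a - z \<in> C"
    by (metis max.cobounded1)
  then show ?thesis
    using that max.cobounded2 by blast
qed

text \<open>Since \<open>C\<close> need not be normal, these order neighbourhoods need not be small in norm;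
  they replace the norm topology wherever \<open>f\<close>, which is not assumed continuous, has to be
  followed along a limit.\<close>

definition order_ball :: "'a \<Rightarrow> real \<Rightarrow> 'a set" where
  "order_ball a \<eta> = {y. y - (1 - \<eta>) *\<^sub>R a \<in> C \<and> (1 + \<eta>) *\<^sub>R a - y \<in> C}"

lemma closed_order_interval: "closed {y. y - a \<in> C \<and> b - y \<in> C}"
proof -
  have "closed ((\<lambda>y. y - a) -` C)" "closed ((\<lambda>y. b - y) -` C)"
    by (rule continuous_closed_vimage[OF closed], intro continuous_intros)+
  then show ?thesis
    by (simp add: closed_Int vimage_def Collect_conj_eq)
qed

lemma closed_order_ball: "closed (order_ball a \<eta>)"
  unfolding order_ball_def by (rule closed_order_interval)

lemma interior_order_ball: assumes "a \<in> interior C" "0 < \<eta>" shows "a \<in> interior (order_ball a \<eta>)"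
proof -
  let ?U = "(\<lambda>y. y - (1 - \<eta>) *\<^sub>R a) -` interior C \<inter> (\<lambda>y. (1 + \<eta>) *\<^sub>R a - y) -` interior C"
  have "open ?U"
    by (intro open_Int continuous_open_vimage[OF open_interior] continuous_intros)
  moreover have "a \<in> ?U"
    using interior_scaleR[OF assms] by (simp add: algebra_simps)
  moreover have "?U \<subseteq> order_ball a \<eta>"
    using interior_subset unfolding order_ball_def by auto
  ultimately show ?thesis
    using interior_maximal by blast
qed

lemma eventually_order_ball:
  assumes "y \<longlonglongrightarrow> a" "a \<in> interior C" "0 < \<eta>"
  shows "eventually (\<lambda>n. y n \<in> order_ball a \<eta>) sequentially"
  using topological_tendstoD[OF assms(1) open_interior interior_order_ball[OF assms(2,3)]]
  by (rule eventually_mono) (use interior_subset in blast)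

lemma order_ball_subset_interior:
  assumes "a \<in> interior C" "\<eta> < 1" "y \<in> order_ball a \<eta>"
  shows "y \<in> interior C"
proof -
  have "(1 - \<eta>) *\<^sub>R a \<in> interior C"
    using interior_scaleR assms(1,2) by simp
  then show ?thesis
    using interior_upward assms(3) unfolding order_ball_def by blast
qed

lemma eq_if_mem_order_balls:
  assumes "\<And>\<eta>. 0 < \<eta> \<Longrightarrow> \<eta> < 1 \<Longrightarrow> b \<in> order_ball a \<eta>"
  shows "b = a"
proof -
  have ev: "eventually (\<lambda>\<eta>. b - (1 - \<eta>) *\<^sub>R a \<in> C \<and> (1 + \<eta>) *\<^sub>R a - b \<in> C) (at_right (0::real))"
    using eventually_at_right_real[of 0 1] by (rule eventually_mono) (use assms in \<open>auto simp: order_ball_def\<close>)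
  have "b - (1 - 0) *\<^sub>R a \<in> C"
  proof (rule Lim_in_closed_set[OF closed _ trivial_limit_at_right_real])
    show "eventually (\<lambda>\<eta>. b - (1 - \<eta>) *\<^sub>R a \<in> C) (at_right 0)"
      using ev by (rule eventually_mono) blast
  qed (intro tendsto_intros)
  moreover have "(1 + 0) *\<^sub>R a - b \<in> C"
  proof (rule Lim_in_closed_set[OF closed _ trivial_limit_at_right_real])
    show "eventually (\<lambda>\<eta>. (1 + \<eta>) *\<^sub>R a - b \<in> C) (at_right 0)"
      using ev by (rule eventually_mono) blast
  qed (intro tendsto_intros)
  ultimately show ?thesis
    using diff_mem_antisym by simp
qed

lemma order_ball_le_scaled:
  assumes "b \<in> C" "0 < \<beta>" "\<beta> < B" "\<beta> *\<^sub>R b - a \<in> C"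
  obtains \<eta> where "0 < \<eta>" "\<eta> < 1"
    "\<And>a' b'. a' \<in> order_ball a \<eta> \<Longrightarrow> b' \<in> order_ball b \<eta> \<Longrightarrow> B *\<^sub>R b' - a' \<in> C"
proof
  define \<eta> where "\<eta> = (B - \<beta>) / (B + \<beta>)"
  show \<eta>: "0 < \<eta>" "\<eta> < 1"
    using assms(2,3) by (auto simp: \<eta>_def field_simps)
  have balance: "B * (1 - \<eta>) = (1 + \<eta>) * \<beta>"
    using assms(2,3) by (simp add: \<eta>_def field_simps)
  fix a' b' assume a': "a' \<in> order_ball a \<eta>" and b': "b' \<in> order_ball b \<eta>"
  have "B *\<^sub>R (b' - (1 - \<eta>) *\<^sub>R b) + (1 + \<eta>) *\<^sub>R (\<beta> *\<^sub>R b - a) + ((1 + \<eta>) *\<^sub>R a - a') \<in> C"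
    using a' b' \<eta> assms(2,3,4) unfolding order_ball_def
    by (intro add_mem scaleR_mem) auto
  also have "B *\<^sub>R (b' - (1 - \<eta>) *\<^sub>R b) + (1 + \<eta>) *\<^sub>R (\<beta> *\<^sub>R b - a) + ((1 + \<eta>) *\<^sub>R a - a')
      = B *\<^sub>R b' - a' + ((1 + \<eta>) * \<beta> - B * (1 - \<eta>)) *\<^sub>R b"
    by (simp add: algebra_simps)
  finally show "B *\<^sub>R b' - a' \<in> C"
    by (simp add: balance)
qed

lemma exists_partial_sum_ge:
  fixes u v :: "nat \<Rightarrow> 'a" and m :: nat
  assumes "p \<in> C" "0 < L" "0 \<le> A" "1 < A * \<theta>"
    and u_lower: "\<And>k. u k - L *\<^sub>R p \<in> C" and u_upper: "\<And>k. U *\<^sub>R p - u k \<in> C"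
    and v_u: "\<And>k. v k - \<theta> *\<^sub>R u (k + m) \<in> C"
  shows "\<exists>N. (\<Sum>k<N. A *\<^sub>R v k - u k) - p \<in> C"
proof -
  define \<gamma> where "\<gamma> = A * \<theta> - 1"
  have \<gamma>: "0 < \<gamma>" "0 < \<gamma> * L"
    using assms(2,4) by (simp_all add: \<gamma>_def)
  obtain N where "(1 + real m * U) / (\<gamma> * L) < real N"
    using reals_Archimedean2 by blast
  then have N: "0 \<le> \<gamma> * real N * L - real m * U - 1"
    using \<gamma>(2) by (simp add: field_simps)
  have u_C: "u k \<in> C" for k
    using add_mem[OF u_lower scaleR_mem[OF less_imp_le[OF assms(2)] assms(1)]] by simp
  have shift: "(\<Sum>k<N. u (k + m)) + (\<Sum>k<m. u k) = (\<Sum>k<N. u k) + (\<Sum>k<m. u (k + N))"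
  proof -
    have "(\<Sum>k<n + j. u k) = (\<Sum>k<j. u k) + (\<Sum>k<n. u (k + j))" for n j
      by (induction n) (simp_all add: add.assoc)
    from this[of N m] this[of m N] show ?thesis
      by (simp add: add.commute)
  qed
  have "(\<Sum>k<N. A *\<^sub>R (v k - \<theta> *\<^sub>R u (k + m))) + (\<Sum>k<N. \<gamma> *\<^sub>R (u (k + m) - L *\<^sub>R p))
      + (\<Sum>k<m. u (k + N)) + (\<Sum>k<m. U *\<^sub>R p - u k)
      + (\<gamma> * real N * L - real m * U - 1) *\<^sub>R p \<in> C"
    using assms(1,3) \<gamma>(1) N v_u u_lower u_upper u_C
    by (intro add_mem sum_mem scaleR_mem) auto
  also have "(\<Sum>k<N. A *\<^sub>R (v k - \<theta> *\<^sub>R u (k + m))) + (\<Sum>k<N. \<gamma> *\<^sub>R (u (k + m) - L *\<^sub>R p))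
      + (\<Sum>k<m. u (k + N)) + (\<Sum>k<m. U *\<^sub>R p - u k)
      + (\<gamma> * real N * L - real m * U - 1) *\<^sub>R p
    = (\<Sum>k<N. A *\<^sub>R v k - u k) - p + ((\<Sum>k<N. u k) + (\<Sum>k<m. u (k + N))
      - (\<Sum>k<N. u (k + m)) - (\<Sum>k<m. u k))"
    by (simp add: \<gamma>_def sum_subtractf scaleR_sum_right sum.distrib sum_constant_scaleR algebra_simps)
  finally show ?thesis
    using shift by (auto simp: algebra_simps)
qed

lemma dominates_partial_sum:
  assumes "\<And>n. w n \<in> C" "\<And>n. \<exists>\<epsilon>>0. w (Suc n) - \<epsilon> *\<^sub>R w n \<in> C"
  shows "\<exists>c>0. w N - c *\<^sub>R (\<Sum>k<N. w k) \<in> C"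
proof (induction N)
  case 0
  show ?case
    using assms(1)[of 0] by (intro exI[of _ 1]) simp
next
  case (Suc N)
  obtain c where c: "0 < c" "w N - c *\<^sub>R (\<Sum>k<N. w k) \<in> C"
    using Suc.IH by blast
  obtain \<epsilon> where \<epsilon>: "0 < \<epsilon>" "w (Suc N) - \<epsilon> *\<^sub>R w N \<in> C"
    using assms(2) by blast
  define d where "d = \<epsilon> / (1 + c)"
  have "d + d * c = d * (1 + c)"
    by (simp add: algebra_simps)
  also have "\<dots> = \<epsilon>"
    using c(1) by (simp add: d_def)
  finally have d: "0 < d" "\<epsilon> = d + d * c"
    using c(1) \<epsilon>(1) by (simp_all add: d_def)
  have "(w (Suc N) - \<epsilon> *\<^sub>R w N) + d *\<^sub>R (w N - c *\<^sub>R (\<Sum>k<N. w k)) \<in> C"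
    using \<epsilon>(2) c(2) d(1) by (intro add_mem scaleR_mem) auto
  also have "(w (Suc N) - \<epsilon> *\<^sub>R w N) + d *\<^sub>R (w N - c *\<^sub>R (\<Sum>k<N. w k))
      = w (Suc N) - (d * c) *\<^sub>R (\<Sum>k<Suc N. w k)"
    unfolding d(2) by (simp add: algebra_simps)
  finally show ?case
    using c(1) d(1) by (metis mult_pos_pos)
qed

end

lemma funpow_diff_apply: assumes "n \<le> N" shows "(f ^^ (N - n)) ((f ^^ n) y) = (f ^^ N) y"
proof -
  have "(f ^^ (N - n)) ((f ^^ n) y) = (f ^^ (N - n + n)) y"
    by (simp add: funpow_add)
  with assms show ?thesis
    by simp
qed

locale typeK_subhomogeneous = cone_order C for C :: "'a::real_normed_vector set" +
  fixes f :: "'a \<Rightarrow> 'a"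
  assumes maps_interior: "f ` interior C \<subseteq> interior C"
    and subhomogeneous: "subhomogeneous_on C (interior C) f"
    and typeK: "typeK_order_preserving_on C (interior C) f"
begin

lemma funpow_interior: "a \<in> interior C \<Longrightarrow> (f ^^ n) a \<in> interior C"
  by (induction n) (use maps_interior in auto)

lemma typeK_gap:
  "a \<in> interior C \<Longrightarrow> b \<in> interior C \<Longrightarrow> b - a \<in> C \<Longrightarrow> \<exists>\<epsilon>>0. (f b - f a) - \<epsilon> *\<^sub>R (b - a) \<in> C"
  using typeK unfolding typeK_order_preserving_on_def cone_le_def by blast

lemma order_preserving: assumes "a \<in> interior C" "b \<in> interior C" "b - a \<in> C" shows "f b - f a \<in> C"
proof -
  obtain \<epsilon> where "0 < \<epsilon>" "(f b - f a) - \<epsilon> *\<^sub>R (b - a) \<in> C"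
    using typeK_gap assms by blast
  from add_mem[OF this(2) scaleR_mem[OF less_imp_le[OF this(1)] assms(3)]] show ?thesis
    by simp
qed

lemma subhom_scale_up: "1 \<le> t \<Longrightarrow> a \<in> interior C \<Longrightarrow> t *\<^sub>R f a - f (t *\<^sub>R a) \<in> C"
  using subhomogeneous unfolding subhomogeneous_on_def cone_le_def by blast

lemma subhom_scale_down: assumes "0 < t" "t \<le> 1" "a \<in> interior C" shows "f (t *\<^sub>R a) - t *\<^sub>R f a \<in> C"
proof -
  have "1 \<le> 1 / t"
    using assms(1,2) by simp
  from subhom_scale_up[OF this interior_scaleR[OF assms(3,1)]]
  have "(1 / t) *\<^sub>R f (t *\<^sub>R a) - f a \<in> C"
    using assms(1) by simp
  then have "t *\<^sub>R ((1 / t) *\<^sub>R f (t *\<^sub>R a) - f a) \<in> C"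
    using scaleR_mem assms(1) by simp
  then show ?thesis
    using assms(1) by (simp add: scaleR_diff_right)
qed

lemma le_scaled_funpow:
  assumes "1 \<le> t" "a \<in> interior C" "b \<in> interior C" "t *\<^sub>R b - a \<in> C"
  shows "t *\<^sub>R (f ^^ n) b - (f ^^ n) a \<in> C"
proof (induction n)
  case (Suc n)
  have "t *\<^sub>R (f ^^ n) b \<in> interior C"
    using interior_scaleR funpow_interior assms by simp
  then have "f (t *\<^sub>R (f ^^ n) b) - f ((f ^^ n) a) \<in> C"
    using order_preserving funpow_interior assms(2) Suc.IH by blast
  from diff_mem_trans[OF this subhom_scale_up[OF assms(1) funpow_interior[OF assms(3)]]] show ?case
    by simp
qed (use assms in simp)

lemma scaled_le_funpow:
  assumes "0 < t" "t \<le> 1" "a \<in> interior C" "b \<in> interior C" "a - t *\<^sub>R b \<in> C"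
  shows "(f ^^ n) a - t *\<^sub>R (f ^^ n) b \<in> C"
proof (induction n)
  case (Suc n)
  have "t *\<^sub>R (f ^^ n) b \<in> interior C"
    using interior_scaleR funpow_interior assms by simp
  then have "f ((f ^^ n) a) - f (t *\<^sub>R (f ^^ n) b) \<in> C"
    using order_preserving funpow_interior assms(3) Suc.IH by blast
  from diff_mem_trans[OF subhom_scale_down[OF assms(1,2) funpow_interior[OF assms(4)]] this] show ?case
    by simp
qed (use assms in simp)

lemma order_ball_funpow:
  assumes "a \<in> interior C" "0 < \<eta>" "\<eta> < 1" "b \<in> order_ball a \<eta>"
  shows "(f ^^ n) b \<in> order_ball ((f ^^ n) a) \<eta>"
proof -
  have "b \<in> interior C"
    using order_ball_subset_interior assms(1,3,4) .
  then show ?thesis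
    using assms le_scaled_funpow[of "1 + \<eta>"] scaled_le_funpow[of "1 - \<eta>"]
    unfolding order_ball_def by simp
qed

lemma tendsto_graph_eq:
  assumes "y \<longlonglongrightarrow> a" "(\<lambda>n. f (y n)) \<longlonglongrightarrow> b" "a \<in> interior C"
  shows "f a = b"
proof -
  have "b \<in> order_ball (f a) \<eta>" if \<eta>: "0 < \<eta>" "\<eta> < 1" for \<eta>
  proof (rule Lim_in_closed_set[OF closed_order_ball _ _ assms(2)])
    show "eventually (\<lambda>n. f (y n) \<in> order_ball (f a) \<eta>) sequentially"
      using eventually_order_ball[OF assms(1,3) \<eta>(1)]
      by (rule eventually_mono) (use order_ball_funpow[OF assms(3) \<eta>, of _ 1] in simp)
  qed simp
  then show ?thesis
    using eq_if_mem_order_balls by metis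
qed

lemma typeK_scaled_gap:
  assumes "1 \<le> t" "a \<in> interior C" "b \<in> interior C" "t *\<^sub>R b - a \<in> C"
  shows "\<exists>\<epsilon>>0. (t *\<^sub>R f b - f a) - \<epsilon> *\<^sub>R (t *\<^sub>R b - a) \<in> C"
proof -
  have "t *\<^sub>R b \<in> interior C"
    using interior_scaleR assms by simp
  then obtain \<epsilon> where \<epsilon>: "0 < \<epsilon>" "(f (t *\<^sub>R b) - f a) - \<epsilon> *\<^sub>R (t *\<^sub>R b - a) \<in> C"
    using typeK_gap assms(2,4) by blast
  from add_mem[OF \<epsilon>(2) subhom_scale_up[OF assms(1,3)]]
  have "(t *\<^sub>R f b - f a) - \<epsilon> *\<^sub>R (t *\<^sub>R b - a) \<in> C"
    by (simp add: algebra_simps)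
  then show ?thesis
    using \<epsilon>(1) by blast
qed

lemma not_le_scaled_limit:
  assumes y: "y \<longlonglongrightarrow> a" "a \<in> interior C" and z: "z \<longlonglongrightarrow> b" "b \<in> interior C"
    and \<gamma>: "\<gamma> \<longlonglongrightarrow> A" "0 < A" "\<beta> < A"
    and not_le: "eventually (\<lambda>i. \<gamma> i *\<^sub>R (f ^^ n) (z i) - (f ^^ n) (y i) \<notin> C) sequentially"
  shows "\<beta> *\<^sub>R (f ^^ n) b - (f ^^ n) a \<notin> C"
proof
  assume le: "\<beta> *\<^sub>R (f ^^ n) b - (f ^^ n) a \<in> C"
  define \<beta>' where "\<beta>' = max \<beta> (A / 2)"
  define B where "B = (\<beta>' + A) / 2"
  have \<beta>': "0 < \<beta>'" "\<beta>' < B" "B < A"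
    using \<gamma>(2,3) by (auto simp: \<beta>'_def B_def)
  have "(f ^^ n) b \<in> C"
    using funpow_interior[OF z(2)] interior_subset by blast
  then have "\<beta>' *\<^sub>R (f ^^ n) b - (f ^^ n) a \<in> C"
    unfolding \<beta>'_def by (rule le_scaled_mono[OF _ max.cobounded1 le])
  then obtain \<eta> where \<eta>: "0 < \<eta>" "\<eta> < 1"
    and close: "\<And>a' b'. a' \<in> order_ball ((f ^^ n) a) \<eta> \<Longrightarrow> b' \<in> order_ball ((f ^^ n) b) \<eta>
      \<Longrightarrow> B *\<^sub>R b' - a' \<in> C"
    using order_ball_le_scaled[OF \<open>(f ^^ n) b \<in> C\<close> \<beta>'(1,2)] by blast
  have "eventually (\<lambda>i. y i \<in> order_ball a \<eta> \<and> z i \<in> order_ball b \<eta> \<and> B < \<gamma> i) sequentially"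
    using eventually_order_ball[OF y \<eta>(1)] eventually_order_ball[OF z \<eta>(1)]
      order_tendstoD(1)[OF \<gamma>(1) \<beta>'(3)]
    by eventually_elim blast
  with not_le have "eventually (\<lambda>i. False) sequentially"
  proof eventually_elim
    case (elim i)
    then have "B *\<^sub>R (f ^^ n) (z i) - (f ^^ n) (y i) \<in> C"
      using close order_ball_funpow y(2) z(2) \<eta> by blast
    moreover have "(f ^^ n) (z i) \<in> C"
      using elim order_ball_subset_interior[OF z(2) \<eta>(2)] funpow_interior interior_subset by blast
    ultimately show False
      using elim le_scaled_mono[of "(f ^^ n) (z i)" B "\<gamma> i"] by auto
  qed
  then show False
    by simp
qed

end

definition omega_limit :: "(nat \<Rightarrow> 'a::topological_space) \<Rightarrow> 'a set" where
  "omega_limit s = (\<Inter>k. closure (s ` {k..}))"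

lemma mem_omega_limit_iff:
  fixes s :: "nat \<Rightarrow> 'a::metric_space"
  shows "u \<in> omega_limit s \<longleftrightarrow> (\<forall>k e. 0 < e \<longrightarrow> (\<exists>i\<ge>k. dist (s i) u < e))"
  by (simp add: omega_limit_def closure_approachable Bex_def)

lemma closed_omega_limit: "closed (omega_limit s)"
  unfolding omega_limit_def by auto

lemma omega_limit_subset_closure: "omega_limit s \<subseteq> closure (range s)"
proof -
  have "omega_limit s \<subseteq> closure (s ` {0..})"
    unfolding omega_limit_def by blast
  then show ?thesis
    by (simp add: atLeast_0)
qed

lemma compact_omega_limit: assumes "compact (closure (range s))" shows "compact (omega_limit s)"
  using compact_Int_closed[OF assms closed_omega_limit[of s]]
  by (simp add: Int_absorb1 omega_limit_subset_closure)

lemma omega_limitI: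
  fixes s :: "nat \<Rightarrow> 'a::metric_space"
  assumes "(\<lambda>i. s (q i)) \<longlonglongrightarrow> u" "\<And>i. i \<le> q i"
  shows "u \<in> omega_limit s"
  unfolding mem_omega_limit_iff
proof (intro allI impI)
  fix k and e :: real
  assume "0 < e"
  then obtain N where "\<forall>n\<ge>N. dist (s (q n)) u < e"
    using metric_LIMSEQ_D[OF assms(1)] by blast
  moreover have "k \<le> q (max k N)"
    using assms(2)[of "max k N"] by simp
  ultimately show "\<exists>i\<ge>k. dist (s i) u < e"
    by auto
qed

lemma omega_limitE:
  fixes s :: "nat \<Rightarrow> 'a::metric_space"
  assumes "u \<in> omega_limit s"
  obtains r where "strict_mono r" "(s \<circ> r) \<longlonglongrightarrow> u"
proof -
  define g where "g n k = (SOME i. k \<le> i \<and> dist (s i) u < inverse (real (Suc n)))" for n k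
  have "k \<le> g n k \<and> dist (s (g n k)) u < inverse (real (Suc n))" for n k
  proof -
    have approach: "\<forall>k e. 0 < e \<longrightarrow> (\<exists>i\<ge>k. dist (s i) u < e)"
      using assms by (simp only: mem_omega_limit_iff)
    have "\<exists>i. k \<le> i \<and> dist (s i) u < inverse (real (Suc n))"
      using spec[OF spec[OF approach, of k], of "inverse (real (Suc n))"] by simp
    then show ?thesis
      unfolding g_def by (rule someI_ex)
  qed
  then have g: "\<And>n k. k \<le> g n k" "\<And>n k. dist (s (g n k)) u < inverse (real (Suc n))"
    by blast+
  define r where "r = rec_nat (g 0 0) (\<lambda>n m. g (Suc n) (Suc m))"
  have r0: "r 0 = g 0 0" and rSuc: "r (Suc n) = g (Suc n) (Suc (r n))" for n
    by (simp_all add: r_def)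
  have "strict_mono r"
    unfolding strict_mono_Suc_iff rSuc using g(1) by (simp add: Suc_le_lessD)
  moreover have "dist (s (r n)) u \<le> inverse (real (Suc n))" for n
    by (cases n) (simp_all only: r0 rSuc g(2) less_imp_le)
  then have "(\<lambda>n. dist ((s \<circ> r) n) u) \<longlonglongrightarrow> 0"
    by (intro tendsto_sandwich[OF _ _ tendsto_const LIMSEQ_inverse_real_of_nat] always_eventually) simp_all
  then have "(s \<circ> r) \<longlonglongrightarrow> u"
    by (rule iffD2[OF tendsto_dist_iff])
  ultimately show ?thesis
    by (rule that)
qed

lemma omega_limit_subseq:
  fixes s :: "nat \<Rightarrow> 'a::metric_space"
  assumes "compact (closure (range s))" "\<And>i. i \<le> q i"
  obtains r l where "strict_mono r" "l \<in> omega_limit s" "(\<lambda>i. s (q (r i))) \<longlonglongrightarrow> l"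
proof -
  have "(s \<circ> q) n \<in> closure (range s)" for n
    by (simp add: closure_subset[THEN subsetD])
  then obtain l and r :: "nat \<Rightarrow> nat" where r: "strict_mono r" "((s \<circ> q) \<circ> r) \<longlonglongrightarrow> l"
    using seq_compactE[OF compact_imp_seq_compact[OF assms(1)]] by metis
  moreover have "l \<in> omega_limit s"
  proof (rule omega_limitI[where q = "q \<circ> r"])
    show "(\<lambda>i. s ((q \<circ> r) i)) \<longlonglongrightarrow> l"
      using r(2) by (simp add: comp_def)
    show "i \<le> (q \<circ> r) i" for i
      using seq_suble[OF r(1), of i] assms(2)[of "r i"] by simp
  qed
  ultimately show ?thesis
    using that by (simp add: comp_def)
qed

lemma tendsto_omega_limit:
  fixes s :: "nat \<Rightarrow> 'a::metric_space"
  assumes "compact (closure (range s))" "\<And>v. v \<in> omega_limit s \<Longrightarrow> v = u"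
  shows "s \<longlonglongrightarrow> u"
  unfolding tendsto_iff
proof (intro allI impI, rule ccontr)
  fix e :: real
  assume "0 < e" "\<not> eventually (\<lambda>n. dist (s n) u < e) sequentially"
  then obtain r :: "nat \<Rightarrow> nat" where r: "strict_mono r" "\<And>n. \<not> dist (s (r n)) u < e"
    using not_eventually_sequentiallyD[of "\<lambda>n. dist (s n) u < e"] by blast
  obtain r' l where "l \<in> omega_limit s" "(\<lambda>i. s (r (r' i))) \<longlonglongrightarrow> l"
    by (rule omega_limit_subseq[OF assms(1) seq_suble[OF r(1)]])
  then have "eventually (\<lambda>i. dist (s (r (r' i))) u < e) sequentially"
    using assms(2) tendstoD \<open>0 < e\<close> by blast
  then obtain N where "\<forall>i\<ge>N. dist (s (r (r' i))) u < e"
    by (auto simp: eventually_sequentially)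
  with r(2) show False
    by blast
qed

locale omega_orbit = typeK_subhomogeneous C f for C :: "'a::real_normed_vector set" and f +
  fixes p x :: 'a
  assumes p_interior: "p \<in> interior C" and fixed_point: "f p = p"
    and x_interior: "x \<in> interior C"
    and compact_orbit: "compact (closure (range (\<lambda>k. (f ^^ k) x)))"
begin

abbreviation orbit :: "nat \<Rightarrow> 'a" where
  "orbit k \<equiv> (f ^^ k) x"

abbreviation \<Omega> :: "'a set" where
  "\<Omega> \<equiv> omega_limit orbit"

lemma omega_bounds:
  obtains L U where "0 < L" "1 \<le> U" "\<And>y. y \<in> \<Omega> \<Longrightarrow> y - L *\<^sub>R p \<in> C \<and> U *\<^sub>R p - y \<in> C"
proof -
  obtain U where U: "1 \<le> U" "U *\<^sub>R p - x \<in> C"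
    using interior_dominates[OF p_interior] .
  obtain M where M: "1 \<le> M" "M *\<^sub>R x - p \<in> C"
    using interior_dominates[OF x_interior] .
  define L where "L = 1 / M"
  have L: "0 < L" "L \<le> 1"
    using M(1) by (auto simp: L_def)
  have "L *\<^sub>R (M *\<^sub>R x - p) \<in> C"
    using scaleR_mem L(1) M(2) by simp
  then have x_lower: "x - L *\<^sub>R p \<in> C"
    using M(1) by (simp add: L_def scaleR_diff_right)
  have fixed: "(f ^^ k) p = p" for k
    by (induction k) (simp_all add: fixed_point)
  have "orbit k \<in> {y. y - L *\<^sub>R p \<in> C \<and> U *\<^sub>R p - y \<in> C}" for k
    using scaled_le_funpow[OF L x_interior p_interior x_lower, of k]
      le_scaled_funpow[OF U(1) x_interior p_interior U(2), of k]
    by (simp add: fixed)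
  then have "closure (range orbit) \<subseteq> {y. y - L *\<^sub>R p \<in> C \<and> U *\<^sub>R p - y \<in> C}"
    by (intro closure_minimal closed_order_interval) auto
  then show ?thesis
    using that[OF L(1) U(1)] omega_limit_subset_closure by blast
qed

lemma omega_interior: assumes "u \<in> \<Omega>" shows "u \<in> interior C"
proof -
  obtain L U where "0 < L" "1 \<le> U" "\<And>y. y \<in> \<Omega> \<Longrightarrow> y - L *\<^sub>R p \<in> C \<and> U *\<^sub>R p - y \<in> C"
    by (rule omega_bounds) blast
  with assms have "0 < L" "u - L *\<^sub>R p \<in> C"
    by blast+
  then show ?thesis
    using interior_upward interior_scaleR[OF p_interior] by blast
qed

lemma compact_omega: "compact \<Omega>"
  using compact_omega_limit[OF compact_orbit] .

lemma omega_nonempty: "\<Omega> \<noteq> {}"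
proof -
  obtain r l where "l \<in> \<Omega>"
    by (rule omega_limit_subseq[OF compact_orbit, of id]) simp
  then show ?thesis
    by blast
qed

lemma f_omega: assumes "u \<in> \<Omega>" shows "f u \<in> \<Omega>"
proof -
  obtain r where r: "strict_mono r" "(orbit \<circ> r) \<longlonglongrightarrow> u"
    using omega_limitE[OF assms] .
  have "i \<le> Suc (r i)" for i
    using seq_suble[OF r(1), of i] by simp
  then obtain r' w where r': "strict_mono r'" "w \<in> \<Omega>" "(\<lambda>i. orbit (Suc (r (r' i)))) \<longlonglongrightarrow> w"
    by (rule omega_limit_subseq[OF compact_orbit])
  have "(\<lambda>i. orbit (r (r' i))) \<longlonglongrightarrow> u"
    using LIMSEQ_subseq_LIMSEQ[OF r(2) r'(1)] by (simp add: comp_def)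
  from tendsto_graph_eq[OF this _ omega_interior[OF assms]] r'(3) have "f u = w"
    by simp
  with r'(2) show ?thesis
    by simp
qed

lemma omega_preimage: assumes "u \<in> \<Omega>" shows "\<exists>w\<in>\<Omega>. f w = u"
proof -
  obtain r where r: "strict_mono r" "(orbit \<circ> r) \<longlonglongrightarrow> u"
    using omega_limitE[OF assms] .
  have q: "i \<le> r (Suc i) - 1" for i
    using seq_suble[OF r(1), of "Suc i"] by simp
  obtain r' w where r': "strict_mono r'" "w \<in> \<Omega>" "(\<lambda>i. orbit (r (Suc (r' i)) - 1)) \<longlonglongrightarrow> w"
    by (rule omega_limit_subseq[OF compact_orbit q])
  have "f (orbit (k - 1)) = orbit k" if "0 < k" for k
    using that by (cases k) auto
  then have "f (orbit (r (Suc (r' i)) - 1)) = orbit (r (Suc (r' i)))" for i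
    using seq_suble[OF r(1), of "Suc (r' i)"] by simp
  moreover have "(\<lambda>i. orbit (r (Suc (r' i)))) \<longlonglongrightarrow> u"
    using LIMSEQ_subseq_LIMSEQ[OF r(2), of "Suc \<circ> r'"] r'(1)
    by (simp add: comp_def strict_mono_def)
  ultimately have "f w = u"
    using tendsto_graph_eq[OF r'(3) _ omega_interior[OF r'(2)]] by simp
  with r'(2) show ?thesis
    by blast
qed

lemma funpow_omega: "u \<in> \<Omega> \<Longrightarrow> (f ^^ n) u \<in> \<Omega>"
  by (induction n) (simp_all add: f_omega)

lemma omega_funpow_preimage: "u \<in> \<Omega> \<Longrightarrow> \<exists>w\<in>\<Omega>. (f ^^ n) w = u"
proof (induction n arbitrary: u)
  case (Suc n)
  then obtain w where "w \<in> \<Omega>" "f w = u"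
    using omega_preimage by blast
  moreover obtain v where "v \<in> \<Omega>" "(f ^^ n) v = w"
    using Suc.IH[OF \<open>w \<in> \<Omega>\<close>] by blast
  ultimately show ?case
    by (intro bexI[of _ v]) auto
qed auto


lemma omega_recurrent:
  assumes "u \<in> \<Omega>" "v \<in> \<Omega>" "0 < \<theta>" "\<theta> < 1"
  shows "\<exists>m. v - \<theta> *\<^sub>R (f ^^ m) u \<in> C"
proof -
  define \<eta> where "\<eta> = (1 - \<theta>) / (1 + \<theta>)"
  have \<eta>: "0 < \<eta>" "\<eta> < 1" "(1 - \<eta>) / (1 + \<eta>) = \<theta>"
    using assms(3,4) by (auto simp: \<eta>_def field_simps)
  obtain d1 where d1: "0 < d1" "ball u d1 \<subseteq> order_ball u \<eta>"
    using interior_order_ball[OF omega_interior[OF assms(1)] \<eta>(1)] mem_interior by blast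
  obtain d2 where d2: "0 < d2" "ball v d2 \<subseteq> order_ball v \<eta>"
    using interior_order_ball[OF omega_interior[OF assms(2)] \<eta>(1)] mem_interior by blast
  obtain i where "dist (orbit i) u < d1"
    using assms(1) d1(1) unfolding mem_omega_limit_iff by blast
  then have "orbit i \<in> order_ball u \<eta>"
    using d1(2) by (auto simp: dist_commute)
  obtain j where j: "i \<le> j" "dist (orbit j) v < d2"
    using assms(2) d2(1) unfolding mem_omega_limit_iff by blast
  from order_ball_funpow[OF omega_interior[OF assms(1)] \<eta>(1,2) \<open>orbit i \<in> order_ball u \<eta>\<close>, of "j - i"]
  have "orbit j \<in> order_ball ((f ^^ (j - i)) u) \<eta>"
    by (simp only: funpow_diff_apply[OF j(1)])
  then have "orbit j - (1 - \<eta>) *\<^sub>R (f ^^ (j - i)) u \<in> C"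
    unfolding order_ball_def by blast
  moreover have "(1 + \<eta>) *\<^sub>R v - orbit j \<in> C"
    using j(2) d2(2) by (auto simp: dist_commute order_ball_def)
  ultimately have "(1 / (1 + \<eta>)) *\<^sub>R ((1 + \<eta>) *\<^sub>R v - (1 - \<eta>) *\<^sub>R (f ^^ (j - i)) u) \<in> C"
    using diff_mem_trans scaleR_mem \<eta>(1) by simp
  then have "v - \<theta> *\<^sub>R (f ^^ (j - i)) u \<in> C"
    using \<eta> by (simp add: scaleR_diff_right)
  then show ?thesis
    by blast
qed

definition spread :: real where
  "spread = Inf {\<beta>. 1 \<le> \<beta> \<and> (\<forall>u\<in>\<Omega>. \<forall>v\<in>\<Omega>. \<beta> *\<^sub>R v - u \<in> C)}"

lemma spread_attained: "1 \<le> spread \<and> (\<forall>u\<in>\<Omega>. \<forall>v\<in>\<Omega>. spread *\<^sub>R v - u \<in> C)"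
proof -
  let ?B = "{\<beta>. 1 \<le> \<beta> \<and> (\<forall>u\<in>\<Omega>. \<forall>v\<in>\<Omega>. \<beta> *\<^sub>R v - u \<in> C)}"
  obtain L U where LU: "0 < L" "1 \<le> U" "\<And>y. y \<in> \<Omega> \<Longrightarrow> y - L *\<^sub>R p \<in> C \<and> U *\<^sub>R p - y \<in> C"
    by (rule omega_bounds) blast
  have "max (U / L) 1 *\<^sub>R v - u \<in> C" if uv: "u \<in> \<Omega>" "v \<in> \<Omega>" for u v
  proof -
    have "(U / L) *\<^sub>R (v - L *\<^sub>R p) + (U *\<^sub>R p - u) \<in> C"
      using LU uv by (intro add_mem scaleR_mem) auto
    then have "(U / L) *\<^sub>R v - u \<in> C"
      using LU(1) by (simp add: algebra_simps)
    moreover have "v \<in> C"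
      using omega_interior[OF uv(2)] interior_subset by blast
    ultimately show ?thesis
      by (intro le_scaled_mono[OF _ max.cobounded1])
  qed
  then have nonempty: "?B \<noteq> {}"
    by (intro ex_in_conv[THEN iffD1] exI[of _ "max (U / L) 1"]) simp
  have bdd: "bdd_below ?B"
    by (rule bdd_belowI[of _ 1]) simp
  have "spread *\<^sub>R v - u \<in> C" if "u \<in> \<Omega>" "v \<in> \<Omega>" for u v
  proof -
    have "closed ((\<lambda>\<beta>::real. \<beta> *\<^sub>R v - u) -` C)"
      by (rule continuous_closed_vimage[OF closed]) (intro continuous_intros)
    then have "closure ?B \<subseteq> (\<lambda>\<beta>. \<beta> *\<^sub>R v - u) -` C"
      by (rule closure_minimal[rotated]) (use that in blast)
    moreover have "spread \<in> closure ?B"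
      unfolding spread_def by (rule closure_contains_Inf[OF nonempty bdd])
    ultimately show ?thesis
      by blast
  qed
  moreover have "1 \<le> spread"
    unfolding spread_def by (rule cInf_greatest[OF nonempty]) simp
  ultimately show ?thesis
    by blast
qed

lemma one_le_spread: "1 \<le> spread"
  using spread_attained by blast

lemma spread_le: "u \<in> \<Omega> \<Longrightarrow> v \<in> \<Omega> \<Longrightarrow> spread *\<^sub>R v - u \<in> C"
  using spread_attained by blast

lemma below_spread:
  assumes "1 \<le> \<beta>" "\<beta> < spread"
  shows "\<exists>u\<in>\<Omega>. \<exists>v\<in>\<Omega>. \<beta> *\<^sub>R v - u \<notin> C"
proof (rule ccontr)
  assume "\<not> ?thesis"
  with assms(1) have "spread \<le> \<beta>"
    unfolding spread_def by (intro cInf_lower bdd_belowI[of _ 1]) auto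
  with assms(2) show False
    by simp
qed

lemma below_spread_prefix:
  assumes "1 \<le> \<beta>" "\<beta> < spread"
  shows "\<exists>uv\<in>\<Omega> \<times> \<Omega>. \<forall>n\<le>N. \<beta> *\<^sub>R (f ^^ n) (snd uv) - (f ^^ n) (fst uv) \<notin> C"
proof -
  obtain a b where ab: "a \<in> \<Omega>" "b \<in> \<Omega>" "\<beta> *\<^sub>R b - a \<notin> C"
    using below_spread[OF assms] by blast
  obtain u where u: "u \<in> \<Omega>" "(f ^^ N) u = a"
    using omega_funpow_preimage[OF ab(1)] by blast
  obtain v where v: "v \<in> \<Omega>" "(f ^^ N) v = b"
    using omega_funpow_preimage[OF ab(2)] by blast
  have "\<beta> *\<^sub>R (f ^^ n) v - (f ^^ n) u \<notin> C" if "n \<le> N" for n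
  proof
    assume le: "\<beta> *\<^sub>R (f ^^ n) v - (f ^^ n) u \<in> C"
    have "(f ^^ n) u \<in> interior C" "(f ^^ n) v \<in> interior C"
      using omega_interior funpow_omega u(1) v(1) by blast+
    from le_scaled_funpow[OF assms(1) this le, of "N - n"] ab(3) show False
      by (simp add: funpow_diff_apply[OF that] u(2) v(2))
  qed
  with u(1) v(1) show ?thesis
    by (intro bexI[of _ "(u, v)"]) auto
qed

lemma approximately_extremal_pairs:
  assumes "1 < spread"
  obtains \<beta> uv where "\<beta> \<longlonglongrightarrow> spread" "\<forall>N. uv N \<in> \<Omega> \<times> \<Omega>"
    "\<And>N n. n \<le> N \<Longrightarrow> \<beta> N *\<^sub>R (f ^^ n) (snd (uv N)) - (f ^^ n) (fst (uv N)) \<notin> C"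
proof -
  define \<beta> where "\<beta> N = spread - (spread - 1) * inverse (real (Suc N))" for N
  have bounds: "0 < (spread - 1) * inverse (real (Suc N))" "(spread - 1) * inverse (real (Suc N)) \<le> spread - 1"
    for N using assms by (auto intro: mult_left_le simp: inverse_le_1_iff)
  have \<beta>: "1 \<le> \<beta> N" "\<beta> N < spread" for N
    using bounds[of N] unfolding \<beta>_def by linarith+
  have "\<beta> \<longlonglongrightarrow> spread"
    unfolding \<beta>_def
    using tendsto_diff[OF tendsto_const tendsto_mult[OF tendsto_const LIMSEQ_inverse_real_of_nat]]
    by simp
  moreover have "\<exists>uv. \<forall>N. uv N \<in> \<Omega> \<times> \<Omega> \<and>
      (\<forall>n\<le>N. \<beta> N *\<^sub>R (f ^^ n) (snd (uv N)) - (f ^^ n) (fst (uv N)) \<notin> C)"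
    by (rule choice) (use below_spread_prefix[OF \<beta>] in blast)
  ultimately show ?thesis
    using that by blast
qed

lemma extremal_orbit_pair:
  assumes "1 < spread"
  obtains u v where "u \<in> \<Omega>" "v \<in> \<Omega>" "\<And>n \<beta>. \<beta> < spread \<Longrightarrow> \<beta> *\<^sub>R (f ^^ n) v - (f ^^ n) u \<notin> C"
proof -
  obtain \<beta> uv where \<beta>_lim: "\<beta> \<longlonglongrightarrow> spread" and uv: "\<forall>N. uv N \<in> \<Omega> \<times> \<Omega>"
    and not_le: "\<And>N n. n \<le> N \<Longrightarrow> \<beta> N *\<^sub>R (f ^^ n) (snd (uv N)) - (f ^^ n) (fst (uv N)) \<notin> C"
    using approximately_extremal_pairs[OF assms] by blast
  from uv obtain ab and r :: "nat \<Rightarrow> nat" where r: "ab \<in> \<Omega> \<times> \<Omega>" "strict_mono r" "(uv \<circ> r) \<longlonglongrightarrow> ab"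
    by (rule seq_compactE[OF compact_imp_seq_compact[OF compact_Times[OF compact_omega compact_omega]]])
  have "\<beta>' *\<^sub>R (f ^^ n) (snd ab) - (f ^^ n) (fst ab) \<notin> C" if "\<beta>' < spread" for n \<beta>'
  proof (rule not_le_scaled_limit)
    show "(\<lambda>i. fst (uv (r i))) \<longlonglongrightarrow> fst ab" "(\<lambda>i. snd (uv (r i))) \<longlonglongrightarrow> snd ab"
      using tendsto_fst[OF r(3)] tendsto_snd[OF r(3)] by (simp_all add: comp_def)
    show "fst ab \<in> interior C" "snd ab \<in> interior C"
      using r(1) omega_interior by auto
    show "(\<lambda>i. \<beta> (r i)) \<longlonglongrightarrow> spread"
      using LIMSEQ_subseq_LIMSEQ[OF \<beta>_lim r(2)] by (simp add: comp_def)
    show "eventually (\<lambda>i. \<beta> (r i) *\<^sub>R (f ^^ n) (snd (uv (r i))) - (f ^^ n) (fst (uv (r i))) \<notin> C)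
      sequentially"
    proof (rule eventually_mono[OF eventually_ge_at_top[of n]])
      fix i
      assume "n \<le> i"
      then have "n \<le> r i"
        using seq_suble[OF r(2), of i] by linarith
      then show "\<beta> (r i) *\<^sub>R (f ^^ n) (snd (uv (r i))) - (f ^^ n) (fst (uv (r i))) \<notin> C"
        by (rule not_le)
    qed
  qed (use assms that in auto)
  with r(1) show ?thesis
    using that[of "fst ab" "snd ab"] by (auto simp: mem_Times_iff)
qed

lemma partial_sums_ge_fixed_point:
  assumes "1 < spread" "u \<in> \<Omega>" "v \<in> \<Omega>"
  shows "\<exists>N. (\<Sum>k<N. spread *\<^sub>R (f ^^ k) v - (f ^^ k) u) - p \<in> C"
proof -
  define \<theta> where "\<theta> = (1 + spread) / (2 * spread)"
  have \<theta>: "0 < \<theta>" "\<theta> < 1" "1 < spread * \<theta>"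
    using assms(1) by (auto simp: \<theta>_def field_simps)
  obtain m where "v - \<theta> *\<^sub>R (f ^^ m) u \<in> C"
    using omega_recurrent[OF assms(2,3) \<theta>(1,2)] by blast
  from scaled_le_funpow[OF \<theta>(1) less_imp_le[OF \<theta>(2)] omega_interior[OF assms(3)]
      omega_interior[OF funpow_omega[OF assms(2)]] this]
  have v_u: "(f ^^ k) v - \<theta> *\<^sub>R (f ^^ (k + m)) u \<in> C" for k
    by (simp add: funpow_add)
  obtain L U where LU: "0 < L" "\<And>y. y \<in> \<Omega> \<Longrightarrow> y - L *\<^sub>R p \<in> C \<and> U *\<^sub>R p - y \<in> C"
    by (rule omega_bounds) blast
  show ?thesis
  proof (rule exists_partial_sum_ge[OF _ LU(1) _ \<theta>(3)])
    show "p \<in> C"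
      using p_interior interior_subset by blast
    show "0 \<le> spread"
      using assms(1) by simp
    show "(f ^^ k) u - L *\<^sub>R p \<in> C" "U *\<^sub>R p - (f ^^ k) u \<in> C" for k
      using LU(2)[OF funpow_omega[OF assms(2)]] by blast+
  qed (rule v_u)
qed

lemma gap_dominates_partial_sums:
  assumes "u \<in> \<Omega>" "v \<in> \<Omega>"
  shows "\<exists>c>0. (spread *\<^sub>R (f ^^ N) v - (f ^^ N) u)
    - c *\<^sub>R (\<Sum>k<N. spread *\<^sub>R (f ^^ k) v - (f ^^ k) u) \<in> C"
proof (rule dominates_partial_sum)
  fix n
  have "(f ^^ n) u \<in> \<Omega>" "(f ^^ n) v \<in> \<Omega>"
    using funpow_omega assms by auto
  then show "spread *\<^sub>R (f ^^ n) v - (f ^^ n) u \<in> C"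
    by (rule spread_le)
  from typeK_scaled_gap[OF one_le_spread omega_interior[OF \<open>(f ^^ n) u \<in> \<Omega>\<close>]
      omega_interior[OF \<open>(f ^^ n) v \<in> \<Omega>\<close>] \<open>spread *\<^sub>R (f ^^ n) v - (f ^^ n) u \<in> C\<close>]
  show "\<exists>\<epsilon>>0. (spread *\<^sub>R (f ^^ Suc n) v - (f ^^ Suc n) u)
      - \<epsilon> *\<^sub>R (spread *\<^sub>R (f ^^ n) v - (f ^^ n) u) \<in> C"
    by simp
qed

lemma spread_eq_one: "spread = 1"
proof (rule ccontr)
  assume "spread \<noteq> 1"
  with one_le_spread have A: "1 < spread"
    by simp
  obtain u v where uv: "u \<in> \<Omega>" "v \<in> \<Omega>"
    and extremal: "\<And>n \<beta>. \<beta> < spread \<Longrightarrow> \<beta> *\<^sub>R (f ^^ n) v - (f ^^ n) u \<notin> C"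
    using extremal_orbit_pair[OF A] by blast
  define w where "w n = spread *\<^sub>R (f ^^ n) v - (f ^^ n) u" for n
  obtain N where N: "(\<Sum>k<N. w k) - p \<in> C"
    using partial_sums_ge_fixed_point[OF A uv] unfolding w_def by blast
  obtain c where c: "0 < c" "w N - c *\<^sub>R (\<Sum>k<N. w k) \<in> C"
    using gap_dominates_partial_sums[OF uv] unfolding w_def by blast
  obtain L U where LU: "0 < L" "1 \<le> U" "\<And>y. y \<in> \<Omega> \<Longrightarrow> y - L *\<^sub>R p \<in> C \<and> U *\<^sub>R p - y \<in> C"
    by (rule omega_bounds) blast
  have "(w N - c *\<^sub>R (\<Sum>k<N. w k)) + c *\<^sub>R ((\<Sum>k<N. w k) - p) + (c / U) *\<^sub>R (U *\<^sub>R p - (f ^^ N) v) \<in> C"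
    using c N LU funpow_omega uv by (intro add_mem scaleR_mem) auto
  also have "(w N - c *\<^sub>R (\<Sum>k<N. w k)) + c *\<^sub>R ((\<Sum>k<N. w k) - p) + (c / U) *\<^sub>R (U *\<^sub>R p - (f ^^ N) v)
      = (spread - c / U) *\<^sub>R (f ^^ N) v - (f ^^ N) u"
    using LU(2) by (simp add: w_def algebra_simps)
  finally show False
    using extremal[of "spread - c / U"] c(1) LU(2) by simp
qed

lemma omega_singleton: "u \<in> \<Omega> \<Longrightarrow> v \<in> \<Omega> \<Longrightarrow> u = v"
  using spread_le[of u v] spread_le[of v u] diff_mem_antisym by (simp add: spread_eq_one)

lemma orbit_tendsto_fixed_point: "\<exists>z\<in>interior C. f z = z \<and> orbit \<longlonglongrightarrow> z"
proof -
  obtain z where z: "z \<in> \<Omega>"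
    using omega_nonempty by blast
  then have "f z = z"
    using omega_singleton f_omega by blast
  moreover have "orbit \<longlonglongrightarrow> z"
    using tendsto_omega_limit[OF compact_orbit] omega_singleton z by blast
  ultimately show ?thesis
    using omega_interior z by blast
qed

end

theorem mainTheorem1:
  fixes C :: "'a::banach set" and f :: "'a \<Rightarrow> 'a" and x :: 'a
  assumes "closed_cone C"
    and "interior C \<noteq> {}"
    and "f ` interior C \<subseteq> interior C"
    and "subhomogeneous_on C (interior C) f"
    and "typeK_order_preserving_on C (interior C) f"
    and "\<exists>p\<in>interior C. f p = p"
    and "x \<in> interior C"
    and "compact (closure {(f ^^ k) x | k. True})"
  shows "\<exists>p\<in>interior C. f p = p \<and> (\<lambda>k. (f ^^ k) x) \<longlonglongrightarrow> p"
proof -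
  obtain p where "p \<in> interior C" "f p = p"
    using assms(6) by blast
  moreover have "{(f ^^ k) x | k. True} = range (\<lambda>k. (f ^^ k) x)"
    by auto
  ultimately interpret omega_orbit C f p x
    using assms by unfold_locales auto
  show ?thesis
    by (rule orbit_tendsto_fixed_point)
qed

end
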